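(* Let $N,A,B\ge1$ and $a\in\mathbb Z^3$ with $|a|\sim A$. Then for either choice of sign $\pm$, $$\sup_{m\in\mathbb Z}\#\{n\in\mathbb Z^3:|n|\sim N,\ |n+a|\sim B,\ |\langle a+n\rangle\pm\langle n\rangle-m|\lesssim1\}\lesssim\min(A,B,N)^{-1}\min(B,N)^3.$$
   Context: $\langle n\rangle=(1+|n|^2)^{1/2}$. "$|x|\sim N$" means $c^{-1}N\le|x|\le cN$ for a fixed absolute constant $c$ (and $|x|\le c$ when the scale is $1$); "$\lesssim1$" inside the set means bounded by a fixed absolute constant. Implicit constants are absolute. *)

theory Defs
  imports "HOL-Analysis.Analysis"
begin

definition jbr :: "real ^ 3 \<Rightarrow> real" where
  "jbr x = sqrt (1 + (norm x)\<^sup>2)"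

definition sim :: "real \<Rightarrow> real \<Rightarrow> real \<Rightarrow> bool" where
  "sim c t N = (if N = 1 then t \<le> c else (N / c \<le> t \<and> t \<le> c * N))"

definition lattice3 :: "(real ^ 3) set" where
  "lattice3 = {x. \<forall>i. x $ i \<in> \<int>}"

end

theory Submission
  imports Defs
begin

text \<open>
  Write \<open>w(n) = \<langle>a + n\<rangle> \<plusminus> \<langle>n\<rangle>\<close>. The identity \<open>2 a\<cdot>n = w\<^sup>2 \<mp> 2 w \<langle>n\<rangle> - |a|\<^sup>2\<close> shows that on a unit
  shell \<open>k \<le> |n| \<le> k + 1\<close> the condition \<open>|w(n) - m| \<le> K\<close> confines \<open>n\<cdot>a/|a|\<close> to an interval of
  length \<open>O(K (|a| + k) / |a|)\<close>. A unit shell meets a slab of width \<open>h\<close> in \<open>O((h + 1)(k + 1))\<close>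
  lattice points: cut the slab into pieces of width 1/2; projecting one piece onto the plane
  orthogonal to the slab gives 1/2-separated points in an annulus of area \<open>O(k + 1)\<close>. Summing
  over the shells of the ball of radius \<open>R\<close> gives \<open>O(R\<^sup>3 / min |a| R)\<close>, and the trivial bound
  \<open>O(R\<^sup>3)\<close> covers \<open>|a| \<lesssim> 1\<close>. The reflection \<open>n \<mapsto> -(n + a)\<close> exchanges \<open>|n|\<close> and \<open>|n + a|\<close> and
  multiplies the phase by \<open>\<plusminus>1\<close>, so the ball may be taken of radius \<open>\<approx> min B N\<close>.
\<close>

section \<open>Lattice points in balls\<close>

lemma lattice3_add: "x \<in> lattice3 \<Longrightarrow> y \<in> lattice3 \<Longrightarrow> x + y \<in> lattice3"
  unfolding lattice3_def by auto

lemma lattice3_uminus: "x \<in> lattice3 \<Longrightarrow> - x \<in> lattice3"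
  unfolding lattice3_def by auto

lemma lattice3_norm_diff_ge_1:
  assumes "n \<in> lattice3" "n' \<in> lattice3" "n \<noteq> n'"
  shows "1 \<le> norm (n - n')"
proof -
  obtain i where i: "n $ i \<noteq> n' $ i"
    using assms(3) by (auto simp: vec_eq_iff)
  have "n $ i - n' $ i \<in> \<int>"
    using assms(1,2) by (auto simp: lattice3_def)
  then obtain k :: int where k: "n $ i - n' $ i = of_int k"
    by (auto elim: Ints_cases)
  with i have "k \<noteq> 0"
    by auto
  then have "1 \<le> \<bar>of_int k :: real\<bar>"
    by linarith
  also have "\<dots> \<le> norm (n - n')"
    using component_le_norm_cart[of "n - n'" i] k by simp
  finally show ?thesis .
qed

lemma lattice3_cball_subset_box:
  "{n \<in> lattice3. norm n \<le> X} \<subseteq> (\<lambda>f. \<chi> i. f i) ` (UNIV \<rightarrow>\<^sub>E of_int ` {-\<lfloor>X\<rfloor>..\<lfloor>X\<rfloor>})"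
proof
  fix n assume n: "n \<in> {n \<in> lattice3. norm n \<le> X}"
  have "n $ i \<in> of_int ` {-\<lfloor>X\<rfloor>..\<lfloor>X\<rfloor>}" for i
  proof -
    obtain k :: int where k: "n $ i = of_int k"
      using n by (auto simp: lattice3_def elim: Ints_cases)
    have "of_int \<bar>k\<bar> \<le> X"
      using component_le_norm_cart[of n i] n k by simp
    then have "\<bar>k\<bar> \<le> \<lfloor>X\<rfloor>"
      by (simp add: le_floor_iff)
    then have "k \<in> {-\<lfloor>X\<rfloor>..\<lfloor>X\<rfloor>}"
      by auto
    then show ?thesis
      unfolding k by (rule imageI)
  qed
  then have "(\<lambda>i. n $ i) \<in> UNIV \<rightarrow>\<^sub>E of_int ` {-\<lfloor>X\<rfloor>..\<lfloor>X\<rfloor>}"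
    by auto
  then show "n \<in> (\<lambda>f. \<chi> i. f i) ` (UNIV \<rightarrow>\<^sub>E of_int ` {-\<lfloor>X\<rfloor>..\<lfloor>X\<rfloor>})"
    by (auto intro: image_eqI[where x = "\<lambda>i. n $ i"])
qed

lemma finite_lattice3_cball: "finite {n \<in> lattice3. norm n \<le> X}"
  by (rule finite_subset[OF lattice3_cball_subset_box]) (intro finite_imageI finite_PiE; simp)

lemma card_lattice3_cball_le:
  assumes "0 \<le> X"
  shows "real (card {n \<in> lattice3. norm n \<le> X}) \<le> (2 * X + 1) ^ 3"
proof -
  define I :: "real set" where "I = of_int ` {-\<lfloor>X\<rfloor>..\<lfloor>X\<rfloor>}"
  have "real (card I) \<le> 2 * X + 1"
  proof -
    have "card I \<le> nat (2 * \<lfloor>X\<rfloor> + 1)"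
      unfolding I_def using card_image_le[of "{-\<lfloor>X\<rfloor>..\<lfloor>X\<rfloor>}" "of_int :: int \<Rightarrow> real"] by simp
    then show ?thesis
      using assms by linarith
  qed
  have "card {n \<in> lattice3. norm n \<le> X} \<le> card ((\<lambda>f. \<chi> i. f i) ` (UNIV \<rightarrow>\<^sub>E I :: (3 \<Rightarrow> real) set))"
    unfolding I_def by (intro card_mono finite_imageI finite_PiE lattice3_cball_subset_box) auto
  also have "\<dots> \<le> card (UNIV \<rightarrow>\<^sub>E I :: (3 \<Rightarrow> real) set)"
    by (rule card_image_le) (auto simp: I_def intro: finite_PiE)
  also have "\<dots> = card I ^ 3"
    by (simp add: card_PiE)
  finally have "real (card {n \<in> lattice3. norm n \<le> X}) \<le> real (card I) ^ 3"
    by (metis of_nat_le_iff of_nat_power)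
  also have "\<dots> \<le> (2 * X + 1) ^ 3"
    using \<open>real (card I) \<le> 2 * X + 1\<close> by (intro power_mono) auto
  finally show ?thesis .
qed

section \<open>Separated points in a planar annulus\<close>

lemma measure_ball_complex: "0 \<le> r \<Longrightarrow> measure lborel (ball (z :: complex) r) = pi * r\<^sup>2"
  by (simp add: content_ball unit_ball_vol_2)

lemma measure_cball_complex: "0 \<le> r \<Longrightarrow> measure lborel (cball (z :: complex) r) = pi * r\<^sup>2"
  by (simp add: content_cball unit_ball_vol_2)

lemma card_separated_in_annulus_le:
  fixes Z :: "complex set"
  assumes "finite Z" and "0 < d" and "0 \<le> r1" and "r1 \<le> r2"
    and sep: "\<And>z w. z \<in> Z \<Longrightarrow> w \<in> Z \<Longrightarrow> z \<noteq> w \<Longrightarrow> d \<le> dist z w"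
    and annulus: "\<And>z. z \<in> Z \<Longrightarrow> r1 \<le> norm z \<and> norm z \<le> r2"
  shows "real (card Z) * (d / 2)\<^sup>2 \<le> (r2 + d / 2)\<^sup>2 - (max 0 (r1 - d / 2))\<^sup>2"
proof -
  define \<rho> where "\<rho> = max 0 (r1 - d / 2)"
  define R where "R = r2 + d / 2"
  have "0 \<le> \<rho>" "\<rho> \<le> R"
    using assms by (auto simp: \<rho>_def R_def)
  have disjoint: "pairwise (\<lambda>x y. negligible (ball x (d / 2) \<inter> ball y (d / 2))) Z"
  proof (rule pairwiseI)
    fix x y assume "x \<in> Z" "y \<in> Z" "x \<noteq> y"
    then have "ball x (d / 2) \<inter> ball y (d / 2) = {}"
      using sep[of x y] dist_triangle_half_r[of _ x d y] by (auto simp: dist_commute)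
    then show "negligible (ball x (d / 2) \<inter> ball y (d / 2))"
      by simp
  qed
  have cover: "(\<Union>z\<in>Z. ball z (d / 2)) \<subseteq> cball 0 R - ball 0 \<rho>"
  proof
    fix p assume "p \<in> (\<Union>z\<in>Z. ball z (d / 2))"
    then obtain z where z: "z \<in> Z" "dist z p < d / 2"
      by auto
    have "norm p \<le> norm z + dist z p" "norm z \<le> norm p + dist z p"
      using norm_triangle_ineq2[of p z] norm_triangle_ineq2[of z p]
      by (auto simp: dist_norm norm_minus_commute)
    then show "p \<in> cball 0 R - ball 0 \<rho>"
      using annulus[OF z(1)] z(2) by (auto simp: R_def \<rho>_def max_def)
  qed
  have "measure lebesgue (\<Union>z\<in>Z. ball z (d / 2)) \<le> measure lebesgue (cball 0 R - ball (0 :: complex) \<rho>)"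
    by (rule measure_mono_fmeasurable[OF cover]) (auto intro!: fmeasurable_Diff sets.finite_UN \<open>finite Z\<close>)
  also have "\<dots> = pi * R\<^sup>2 - pi * \<rho>\<^sup>2"
    using \<open>0 \<le> \<rho>\<close> \<open>\<rho> \<le> R\<close>
    by (subst measurable_measure_Diff) (auto simp: measure_ball_complex measure_cball_complex)
  finally have "real (card Z) * (pi * (d / 2)\<^sup>2) \<le> pi * (R\<^sup>2 - \<rho>\<^sup>2)"
    using measure_negligible_finite_Union_image[OF \<open>finite Z\<close> _ disjoint] \<open>0 < d\<close>
    by (simp add: measure_ball_complex algebra_simps)
  then show ?thesis
    unfolding R_def \<rho>_def by (simp add: mult.left_commute)
qed

lemma card_half_separated_le:
  fixes Z :: "complex set"
  assumes "finite Z" and "0 \<le> W" and "0 \<le> q"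
    and sep: "\<And>z w. z \<in> Z \<Longrightarrow> w \<in> Z \<Longrightarrow> z \<noteq> w \<Longrightarrow> 1 / 2 \<le> dist z w"
    and near: "\<And>z. z \<in> Z \<Longrightarrow> \<bar>(norm z)\<^sup>2 - q\<bar> \<le> W"
  shows "real (card Z) \<le> 16 * (2 * W + sqrt (q + W) + 1)"
proof -
  define r1 where "r1 = sqrt (max 0 (q - W))"
  define r2 where "r2 = sqrt (q + W)"
  have "0 \<le> r1" "r1 \<le> r2"
    unfolding r1_def r2_def using assms by auto
  have annulus: "r1 \<le> norm z \<and> norm z \<le> r2" if "z \<in> Z" for z
  proof -
    have "r1 \<le> sqrt ((norm z)\<^sup>2)"
      unfolding r1_def using near[OF that] by (intro real_sqrt_le_mono) auto
    moreover have "sqrt ((norm z)\<^sup>2) \<le> r2"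
      unfolding r2_def using near[OF that] by (intro real_sqrt_le_mono) auto
    ultimately show ?thesis
      by simp
  qed
  have "real (card Z) * (1 / 4)\<^sup>2 \<le> (r2 + 1 / 4)\<^sup>2 - (max 0 (r1 - 1 / 4))\<^sup>2"
    using card_separated_in_annulus_le[OF \<open>finite Z\<close> _ \<open>0 \<le> r1\<close> \<open>r1 \<le> r2\<close> sep annulus]
    by simp
  also have "\<dots> \<le> 2 * W + r2 + 1"
  proof -
    have "r1\<^sup>2 - r1 / 2 \<le> (max 0 (r1 - 1 / 4))\<^sup>2"
    proof (cases "1 / 4 \<le> r1")
      case False
      then have "r1 * r1 \<le> r1 * (1 / 2)"
        using \<open>0 \<le> r1\<close> by (intro mult_left_mono) auto
      then show ?thesis
        using False by (simp add: max_def power2_eq_square)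
    qed (simp add: max_def power2_eq_square algebra_simps)
    moreover have "r2\<^sup>2 - r1\<^sup>2 \<le> 2 * W"
      using assms unfolding r1_def r2_def by (simp add: max_def)
    ultimately show ?thesis
      using \<open>r1 \<le> r2\<close> by (simp add: power2_eq_square algebra_simps)
  qed
  finally show ?thesis
    unfolding r2_def by (simp add: power2_eq_square)
qed

lemma orthogonal_plane_projection:
  fixes e :: "real ^ 3"
  assumes "norm e = 1"
  obtains p :: "real ^ 3 \<Rightarrow> complex"
  where "linear p" and "\<And>x. (norm (p x))\<^sup>2 = (norm x)\<^sup>2 - (x \<bullet> e)\<^sup>2"
proof -
  obtain F :: "real ^ 3 \<Rightarrow> real ^ 3"
    where F: "orthogonal_transformation F" "F e = axis 3 1"
    using orthogonal_transformation_exists[of e "axis 3 1"] assms by auto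
  define p where "p x = Complex (F x $ 1) (F x $ 2)" for x
  have "linear F"
    using F(1) by (simp add: orthogonal_transformation)
  then have "linear p"
    unfolding linear_iff p_def by (simp add: linear_add linear_scale complex_eq_iff)
  moreover have "(norm (p x))\<^sup>2 = (norm x)\<^sup>2 - (x \<bullet> e)\<^sup>2" for x
  proof -
    have "(norm (F x))\<^sup>2 = F x \<bullet> F x"
      by (rule power2_norm_eq_inner)
    also have "\<dots> = (F x $ 1)\<^sup>2 + (F x $ 2)\<^sup>2 + (F x $ 3)\<^sup>2"
      by (simp add: inner_vec_def sum_3 power2_eq_square)
    finally have "(norm (F x))\<^sup>2 = (F x $ 1)\<^sup>2 + (F x $ 2)\<^sup>2 + (F x $ 3)\<^sup>2" .
    moreover have "F x $ 3 = x \<bullet> e"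
    proof -
      have "F x $ 3 = F x \<bullet> F e"
        using F(2) by (simp add: inner_axis)
      also have "\<dots> = x \<bullet> e"
        using F(1) by (simp add: orthogonal_transformation_def)
      finally show ?thesis .
    qed
    moreover have "norm (F x) = norm x"
      using F(1) by (simp add: orthogonal_transformation)
    ultimately show ?thesis
      by (simp add: p_def cmod_power2)
  qed
  ultimately show ?thesis
    using that by blast
qed

section \<open>Lattice points in a shell and a slab\<close>

lemma card_le_by_unit_slices:
  fixes f :: "'a \<Rightarrow> real"
  assumes "finite T" and "0 \<le> X"
    and range: "\<And>x. x \<in> T \<Longrightarrow> 0 \<le> f x \<and> f x \<le> X"
    and slice: "\<And>k :: nat. real k \<le> X \<Longrightarrow> real (card {x \<in> T. real k \<le> f x \<and> f x \<le> real k + 1}) \<le> M"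
  shows "real (card T) \<le> (X + 1) * M"
proof -
  define L where "L = nat \<lfloor>X\<rfloor>"
  define S where "S k = {x \<in> T. real k \<le> f x \<and> f x \<le> real k + 1}" for k :: nat
  have "T \<subseteq> (\<Union>k\<in>{..L}. S k)"
  proof
    fix x assume "x \<in> T"
    then have "x \<in> S (nat \<lfloor>f x\<rfloor>)" "nat \<lfloor>f x\<rfloor> \<le> L"
      using range[of x] by (simp_all add: S_def L_def nat_mono floor_mono)
    then show "x \<in> (\<Union>k\<in>{..L}. S k)"
      by auto
  qed
  then have "card T \<le> card (\<Union>k\<in>{..L}. S k)"
    by (intro card_mono) (auto simp: S_def \<open>finite T\<close>)
  also have "\<dots> \<le> (\<Sum>k\<le>L. card (S k))"
    by (rule card_UN_le) simp
  finally have "real (card T) \<le> (\<Sum>k\<le>L. real (card (S k)))"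
    by (metis of_nat_le_iff of_nat_sum)
  also have "\<dots> \<le> (\<Sum>k\<le>L. M)"
    using \<open>0 \<le> X\<close> by (intro sum_mono slice[unfolded S_def[symmetric]]) (simp add: L_def, linarith)
  also have "\<dots> \<le> (X + 1) * M"
  proof -
    have "0 \<le> M"
      using slice[of 0] \<open>0 \<le> X\<close> by simp
    moreover have "real L + 1 \<le> X + 1"
      using \<open>0 \<le> X\<close> by (simp add: L_def)
    ultimately show ?thesis
      by (simp add: mult_right_mono)
  qed
  finally show ?thesis .
qed

lemma norm_sq_minus_inner_sq_diff_le:
  fixes n n' e :: "'a :: real_inner"
  assumes "norm e = 1" and "0 \<le> r"
    and "r \<le> norm n" "norm n \<le> r + 1" "r \<le> norm n'" "norm n' \<le> r + 1"
    and "\<bar>n \<bullet> e - n' \<bullet> e\<bar> \<le> 1 / 2"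
  shows "\<bar>((norm n)\<^sup>2 - (n \<bullet> e)\<^sup>2) - ((norm n')\<^sup>2 - (n' \<bullet> e)\<^sup>2)\<bar> \<le> 3 * r + 2"
proof -
  have sq: "r\<^sup>2 \<le> (norm x)\<^sup>2 \<and> (norm x)\<^sup>2 \<le> r\<^sup>2 + 2 * r + 1" if "r \<le> norm x" "norm x \<le> r + 1" for x :: 'a
    using that \<open>0 \<le> r\<close> power_mono[of r "norm x" 2] power_mono[of "norm x" "r + 1" 2]
    by (simp add: power2_eq_square algebra_simps)
  have norms: "\<bar>(norm n)\<^sup>2 - (norm n')\<^sup>2\<bar> \<le> 2 * r + 1"
    unfolding abs_le_iff using sq[of n] sq[of n'] assms(3-6) by linarith
  have "\<bar>n \<bullet> e\<bar> \<le> norm n" "\<bar>n' \<bullet> e\<bar> \<le> norm n'"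
    using Cauchy_Schwarz_ineq2[of n e] Cauchy_Schwarz_ineq2[of n' e] \<open>norm e = 1\<close> by simp_all
  then have "\<bar>n \<bullet> e + n' \<bullet> e\<bar> \<le> 2 * r + 2"
    using abs_triangle_ineq[of "n \<bullet> e" "n' \<bullet> e"] assms(4,6) by linarith
  then have "\<bar>n \<bullet> e - n' \<bullet> e\<bar> * \<bar>n \<bullet> e + n' \<bullet> e\<bar> \<le> 1 / 2 * (2 * r + 2)"
    using assms(7) by (intro mult_mono) auto
  moreover have "(n \<bullet> e)\<^sup>2 - (n' \<bullet> e)\<^sup>2 = (n \<bullet> e - n' \<bullet> e) * (n \<bullet> e + n' \<bullet> e)"
    by (simp add: power2_eq_square algebra_simps)
  ultimately have "\<bar>(n \<bullet> e)\<^sup>2 - (n' \<bullet> e)\<^sup>2\<bar> \<le> r + 1"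
    by (simp add: abs_mult)
  then show ?thesis
    using norms by linarith
qed

lemma card_lattice3_shell_slice_le:
  fixes e :: "real ^ 3"
  assumes "norm e = 1" and "T \<subseteq> lattice3" and "0 \<le> r"
    and shell: "\<And>n. n \<in> T \<Longrightarrow> r \<le> norm n \<and> norm n \<le> r + 1"
    and slice: "\<And>n. n \<in> T \<Longrightarrow> \<alpha> \<le> n \<bullet> e \<and> n \<bullet> e \<le> \<alpha> + 1 / 2"
  shows "real (card T) \<le> 128 * (r + 1)"
proof (cases "T = {}")
  case True
  then show ?thesis
    using \<open>0 \<le> r\<close> by simp
next
  case False
  then obtain n1 where "n1 \<in> T"
    by auto
  obtain p :: "real ^ 3 \<Rightarrow> complex"
    where "linear p" and norm_p: "\<And>x. (norm (p x))\<^sup>2 = (norm x)\<^sup>2 - (x \<bullet> e)\<^sup>2"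
    using orthogonal_plane_projection[OF \<open>norm e = 1\<close>] by blast
  have "finite T"
    using assms by (intro rev_finite_subset[OF finite_lattice3_cball[of "r + 1"]]) auto
  have sep: "1 / 2 \<le> dist (p n) (p n')" if "n \<in> T" "n' \<in> T" "n \<noteq> n'" for n n'
  proof -
    have "1 \<le> norm (n - n')"
      using lattice3_norm_diff_ge_1[of n n'] that \<open>T \<subseteq> lattice3\<close> by auto
    then have "1 \<le> (norm (n - n'))\<^sup>2"
      by (rule one_le_power)
    moreover have "\<bar>(n - n') \<bullet> e\<bar> \<le> 1 / 2"
      unfolding inner_diff_left abs_le_iff using slice[OF that(1)] slice[OF that(2)] by linarith
    then have "((n - n') \<bullet> e)\<^sup>2 \<le> (1 / 2)\<^sup>2"
      by (metis power2_abs abs_ge_zero power_mono)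
    ultimately have "(1 / 2)\<^sup>2 \<le> (norm (p (n - n')))\<^sup>2"
      unfolding norm_p by (simp add: power2_eq_square)
    then show ?thesis
      using \<open>linear p\<close> by (simp add: dist_norm linear_diff power_mono_iff)
  qed
  then have "inj_on p T"
    by (fastforce intro: inj_onI)
  define q where "q = (norm (p n1))\<^sup>2"
  have near: "\<bar>(norm (p n))\<^sup>2 - q\<bar> \<le> 3 * r + 2" if "n \<in> T" for n
  proof -
    have "\<bar>n \<bullet> e - n1 \<bullet> e\<bar> \<le> 1 / 2"
      unfolding abs_le_iff using slice[OF that] slice[OF \<open>n1 \<in> T\<close>] by linarith
    then show ?thesis
      unfolding q_def norm_p using assms shell[OF that] shell[OF \<open>n1 \<in> T\<close>]
      by (intro norm_sq_minus_inner_sq_diff_le) auto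
  qed
  have "(norm n1)\<^sup>2 \<le> (r + 1)\<^sup>2"
    using shell[OF \<open>n1 \<in> T\<close>] by (intro power_mono) auto
  then have "q \<le> (r + 1)\<^sup>2"
    unfolding q_def norm_p using zero_le_power2[of "n1 \<bullet> e"] by linarith
  then have "sqrt (q + (3 * r + 2)) \<le> r + 3"
    using \<open>0 \<le> r\<close> by (intro real_le_lsqrt) (auto simp: power2_eq_square algebra_simps)
  moreover have "real (card (p ` T)) \<le> 16 * (2 * (3 * r + 2) + sqrt (q + (3 * r + 2)) + 1)"
    using \<open>finite T\<close> \<open>0 \<le> r\<close> sep near by (intro card_half_separated_le) (auto simp: q_def)
  ultimately show ?thesis
    using \<open>inj_on p T\<close> \<open>0 \<le> r\<close> by (simp add: card_image)
qed

lemma card_lattice3_shell_slab_le: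
  fixes e :: "real ^ 3"
  assumes "norm e = 1" and "T \<subseteq> lattice3" and "0 \<le> r" and "0 \<le> h"
    and shell: "\<And>n. n \<in> T \<Longrightarrow> r \<le> norm n \<and> norm n \<le> r + 1"
    and slab: "\<And>n n'. n \<in> T \<Longrightarrow> n' \<in> T \<Longrightarrow> \<bar>n \<bullet> e - n' \<bullet> e\<bar> \<le> h"
  shows "real (card T) \<le> 512 * (h + 1) * (r + 1)"
proof (cases "T = {}")
  case True
  then show ?thesis
    using assms by simp
next
  case False
  then obtain n0 where "n0 \<in> T"
    by auto
  define \<alpha> where "\<alpha> = n0 \<bullet> e - h"
  have "real (card T) \<le> (4 * h + 1) * (128 * (r + 1))"
  proof (rule card_le_by_unit_slices[where f = "\<lambda>n. 2 * (n \<bullet> e - \<alpha>)"])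
    show "finite T"
      using assms by (intro rev_finite_subset[OF finite_lattice3_cball[of "r + 1"]]) auto
    show "0 \<le> 2 * (n \<bullet> e - \<alpha>) \<and> 2 * (n \<bullet> e - \<alpha>) \<le> 4 * h" if "n \<in> T" for n
      using slab[OF that \<open>n0 \<in> T\<close>] by (auto simp: \<alpha>_def abs_le_iff)
    show "real (card {n \<in> T. real k \<le> 2 * (n \<bullet> e - \<alpha>) \<and> 2 * (n \<bullet> e - \<alpha>) \<le> real k + 1})
        \<le> 128 * (r + 1)" for k
      using assms(1,3) shell
      by (intro card_lattice3_shell_slice_le[where \<alpha> = "\<alpha> + real k / 2"]) (use assms(2) in auto)
  qed (use \<open>0 \<le> h\<close> in simp)
  also have "\<dots> \<le> 512 * (h + 1) * (r + 1)"
    using assms by (simp add: algebra_simps)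
  finally show ?thesis .
qed

section \<open>The phase\<close>

definition phase :: "real ^ 3 \<Rightarrow> real \<Rightarrow> real ^ 3 \<Rightarrow> real" where
  "phase a s n = jbr (a + n) + s * jbr n"

lemma norm_le_jbr: "norm x \<le> jbr x"
  unfolding jbr_def by (rule real_le_rsqrt) simp

lemma jbr_le_norm_add_1: "jbr x \<le> norm x + 1"
  unfolding jbr_def by (rule real_le_lsqrt) (auto simp: power2_eq_square algebra_simps)

lemma jbr_uminus [simp]: "jbr (- x) = jbr x"
  unfolding jbr_def by simp

lemma phase_reflect:
  assumes "s \<in> {1, -1}"
  shows "phase a s (- (n + a)) = s * phase a s n"
proof -
  have "jbr (a + - (n + a)) = jbr n" "jbr (- (n + a)) = jbr (a + n)"
    by (simp, metis jbr_uminus add.commute)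
  then show ?thesis
    using assms unfolding phase_def by (auto simp: algebra_simps)
qed

lemma inner_eq_phase:
  assumes "s \<in> {1, -1}"
  shows "2 * (a \<bullet> n) = (phase a s n)\<^sup>2 - 2 * s * phase a s n * jbr n - (norm a)\<^sup>2"
proof -
  have "(phase a s n)\<^sup>2 - 2 * s * phase a s n * jbr n = (jbr (a + n))\<^sup>2 - (s * s) * (jbr n)\<^sup>2"
    unfolding phase_def by (simp add: power2_eq_square algebra_simps)
  also have "\<dots> = (norm (a + n))\<^sup>2 - (norm n)\<^sup>2"
    using assms by (auto simp: jbr_def)
  also have "\<dots> = (norm a)\<^sup>2 + 2 * (a \<bullet> n)"
    by (simp add: power2_norm_eq_inner inner_add_left inner_add_right inner_commute)
  finally show ?thesis
    by simp
qed

lemma quadratic_diff_le: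
  fixes w w' v v' s L B :: real
  assumes "\<bar>s\<bar> = 1" and "\<bar>w - w'\<bar> \<le> L" and "\<bar>w\<bar> \<le> B" and "\<bar>w'\<bar> \<le> B"
    and "\<bar>v - v'\<bar> \<le> 2" and "\<bar>v'\<bar> \<le> B"
  shows "\<bar>(w\<^sup>2 - 2 * s * w * v) - (w'\<^sup>2 - 2 * s * w' * v')\<bar> \<le> 4 * (L + 1) * B"
proof -
  have "\<bar>w\<^sup>2 - w'\<^sup>2\<bar> = \<bar>w - w'\<bar> * \<bar>w + w'\<bar>"
    by (simp add: power2_eq_square algebra_simps flip: abs_mult)
  also have "\<dots> \<le> L * (2 * B)"
    using assms abs_triangle_ineq[of w w'] by (intro mult_mono) auto
  finally have squares: "\<bar>w\<^sup>2 - w'\<^sup>2\<bar> \<le> 2 * L * B"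
    by simp
  have "\<bar>w * v - w' * v'\<bar> = \<bar>w * (v - v') + v' * (w - w')\<bar>"
    by (simp add: algebra_simps)
  also have "\<dots> \<le> \<bar>w\<bar> * \<bar>v - v'\<bar> + \<bar>v'\<bar> * \<bar>w - w'\<bar>"
    by (metis abs_mult abs_triangle_ineq)
  also have "\<dots> \<le> B * 2 + B * L"
    using assms by (intro add_mono mult_mono) auto
  finally have products: "\<bar>w * v - w' * v'\<bar> \<le> B * 2 + B * L" .
  have "(w\<^sup>2 - 2 * s * w * v) - (w'\<^sup>2 - 2 * s * w' * v') = (w\<^sup>2 - w'\<^sup>2) - 2 * s * (w * v - w' * v')"
    by (simp add: algebra_simps)
  then have "\<bar>(w\<^sup>2 - 2 * s * w * v) - (w'\<^sup>2 - 2 * s * w' * v')\<bar>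
      \<le> \<bar>w\<^sup>2 - w'\<^sup>2\<bar> + 2 * \<bar>s\<bar> * \<bar>w * v - w' * v'\<bar>"
    using abs_triangle_ineq4[of "w\<^sup>2 - w'\<^sup>2" "2 * s * (w * v - w' * v')"] by (simp add: abs_mult)
  also have "\<dots> \<le> 4 * (L + 1) * B"
    using squares products \<open>\<bar>s\<bar> = 1\<close> by (simp add: algebra_simps)
  finally show ?thesis .
qed

lemma phase_shell_inner_diff_le:
  assumes "s \<in> {1, -1}" and "0 \<le> k"
    and "k \<le> norm n" "norm n \<le> k + 1" "k \<le> norm n'" "norm n' \<le> k + 1"
    and "\<bar>phase a s n - m\<bar> \<le> K" "\<bar>phase a s n' - m\<bar> \<le> K"
  shows "\<bar>a \<bullet> n - a \<bullet> n'\<bar> \<le> (4 * K + 2) * (norm a + 2 * k + 4)"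
proof -
  define B where "B = norm a + 2 * k + 4"
  have phase_le: "\<bar>phase a s x\<bar> \<le> B" if "norm x \<le> k + 1" for x
  proof -
    have "\<bar>phase a s x\<bar> \<le> jbr (a + x) + jbr x"
      using assms(1) abs_triangle_ineq[of "jbr (a + x)" "s * jbr x"]
      by (auto simp: phase_def jbr_def)
    also have "\<dots> \<le> (norm a + norm x + 1) + (norm x + 1)"
      using jbr_le_norm_add_1[of "a + x"] jbr_le_norm_add_1[of x] norm_triangle_ineq[of a x] by linarith
    finally show ?thesis
      using that by (simp add: B_def)
  qed
  have "k \<le> jbr n" "jbr n \<le> k + 2" "k \<le> jbr n'" "jbr n' \<le> k + 2"
    using assms(3-6) norm_le_jbr[of n] jbr_le_norm_add_1[of n] norm_le_jbr[of n'] jbr_le_norm_add_1[of n']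
    by linarith+
  then have "\<bar>jbr n - jbr n'\<bar> \<le> 2" "\<bar>jbr n'\<bar> \<le> B"
    unfolding B_def abs_le_iff using assms(2) norm_ge_zero[of a] by linarith+
  moreover have "\<bar>phase a s n - phase a s n'\<bar> \<le> 2 * K"
    using assms(7,8) by linarith
  moreover have "\<bar>s\<bar> = 1"
    using assms(1) by auto
  ultimately have "\<bar>((phase a s n)\<^sup>2 - 2 * s * phase a s n * jbr n)
      - ((phase a s n')\<^sup>2 - 2 * s * phase a s n' * jbr n')\<bar> \<le> 4 * (2 * K + 1) * B"
    using phase_le assms(4,6) by (intro quadratic_diff_le) auto
  then have "\<bar>2 * (a \<bullet> n) - 2 * (a \<bullet> n')\<bar> \<le> 4 * (2 * K + 1) * B"
    unfolding inner_eq_phase[OF assms(1)] by simp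
  then show ?thesis
    by (simp add: B_def algebra_simps)
qed

section \<open>Counting lattice points with nearly prescribed phase\<close>

lemma card_phase_shell_le:
  fixes a :: "real ^ 3"
  assumes "a \<noteq> 0" and "s \<in> {1, -1}" and "0 \<le> K" and "0 \<le> k" and "T \<subseteq> lattice3"
    and T: "\<And>n. n \<in> T \<Longrightarrow> k \<le> norm n \<and> norm n \<le> k + 1 \<and> \<bar>phase a s n - m\<bar> \<le> K"
  shows "real (card T) \<le> 512 * ((4 * K + 2) * (norm a + 2 * k + 4) / norm a + 1) * (k + 1)"
proof (rule card_lattice3_shell_slab_le)
  show "norm (a /\<^sub>R norm a) = 1"
    using \<open>a \<noteq> 0\<close> by simp
  show "\<bar>n \<bullet> (a /\<^sub>R norm a) - n' \<bullet> (a /\<^sub>R norm a)\<bar> \<le> (4 * K + 2) * (norm a + 2 * k + 4) / norm a"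
    if "n \<in> T" "n' \<in> T" for n n'
  proof -
    have "n \<bullet> (a /\<^sub>R norm a) - n' \<bullet> (a /\<^sub>R norm a) = (a \<bullet> n - a \<bullet> n') / norm a"
      using \<open>a \<noteq> 0\<close> by (simp add: inner_commute field_simps)
    then have "\<bar>n \<bullet> (a /\<^sub>R norm a) - n' \<bullet> (a /\<^sub>R norm a)\<bar> = \<bar>a \<bullet> n - a \<bullet> n'\<bar> / norm a"
      by simp
    also have "\<dots> \<le> (4 * K + 2) * (norm a + 2 * k + 4) / norm a"
      using phase_shell_inner_diff_le[OF \<open>s \<in> {1, -1}\<close> \<open>0 \<le> k\<close>] T[OF that(1)] T[OF that(2)]
      by (intro divide_right_mono) auto
    finally show ?thesis .
  qed
qed (use assms in auto)

lemma card_phase_level_set_le: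
  fixes a :: "real ^ 3"
  assumes "a \<noteq> 0" and "s \<in> {1, -1}" and "0 \<le> K" and "1 \<le> X"
  shows "real (card {n \<in> lattice3. norm n \<le> X \<and> \<bar>phase a s n - m\<bar> \<le> K})
    \<le> 14336 * (4 * K + 3) * X ^ 3 / min (norm a) X"
proof -
  define U where "U = {n \<in> lattice3. norm n \<le> X \<and> \<bar>phase a s n - m\<bar> \<le> K}"
  define t where "t = X / min (norm a) X"
  have "1 \<le> t" "X / norm a \<le> t"
    using assms by (auto simp: t_def min_def field_simps)
  define q where "q = 6 * X / norm a"
  have "0 \<le> q"
    using assms by (simp add: q_def)
  have "1 + q \<le> 7 * t"
    using \<open>1 \<le> t\<close> \<open>X / norm a \<le> t\<close> by (simp add: q_def)
  define M where "M = 512 * ((4 * K + 3) * (1 + q)) * (2 * X)"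
  have "real (card U) \<le> (X + 1) * M"
  proof (rule card_le_by_unit_slices[where f = norm])
    show "finite U"
      unfolding U_def by (rule rev_finite_subset[OF finite_lattice3_cball[of X]]) auto
    fix k :: nat
    assume "real k \<le> X"
    have "(4 * K + 2) * (norm a + 2 * real k + 4) / norm a + 1 = (4 * K + 2) * (1 + (2 * real k + 4) / norm a) + 1"
      using \<open>a \<noteq> 0\<close> by (simp add: field_simps)
    also have "\<dots> \<le> (4 * K + 2) * (1 + q) + 1"
      unfolding q_def using \<open>real k \<le> X\<close> \<open>1 \<le> X\<close> \<open>0 \<le> K\<close>
      by (intro add_mono mult_left_mono divide_right_mono) auto
    also have "\<dots> \<le> (4 * K + 3) * (1 + q)"
      using \<open>0 \<le> q\<close> by (simp add: algebra_simps)
    finally have "512 * ((4 * K + 2) * (norm a + 2 * real k + 4) / norm a + 1) * (real k + 1) \<le> M"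
      unfolding M_def using \<open>real k \<le> X\<close> \<open>1 \<le> X\<close> \<open>0 \<le> K\<close> \<open>0 \<le> q\<close> by (intro mult_mono) auto
    moreover have "real (card {n \<in> U. real k \<le> norm n \<and> norm n \<le> real k + 1})
        \<le> 512 * ((4 * K + 2) * (norm a + 2 * real k + 4) / norm a + 1) * (real k + 1)"
      using assms by (intro card_phase_shell_le) (auto simp: U_def)
    ultimately show "real (card {n \<in> U. real k \<le> norm n \<and> norm n \<le> real k + 1}) \<le> M"
      by linarith
  qed (use assms in \<open>auto simp: U_def\<close>)
  also have "\<dots> \<le> (2 * X) * (512 * ((4 * K + 3) * (7 * t)) * (2 * X))"
    unfolding M_def using assms \<open>0 \<le> q\<close> \<open>1 + q \<le> 7 * t\<close> by (intro mult_mono) auto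
  also have "\<dots> = 14336 * (4 * K + 3) * X ^ 3 / min (norm a) X"
    by (simp add: t_def power3_eq_cube)
  finally show ?thesis
    unfolding U_def .
qed

lemma sim_imp_le: "1 \<le> c \<Longrightarrow> sim c t N \<Longrightarrow> t \<le> c * N"
  unfolding sim_def by (auto split: if_splits)

lemma card_phase_level_set_scaled_le:
  fixes a :: "real ^ 3"
  assumes "1 \<le> c" and "0 \<le> K" and "1 \<le> R" and "1 \<le> A" and "sim c (norm a) A" and "s \<in> {1, -1}"
  shows "real (card {n \<in> lattice3. norm n \<le> c * R \<and> \<bar>phase a s n - m\<bar> \<le> K})
    \<le> 14336 * (4 * K + 3) * c ^ 4 * R ^ 3 / min A R"
proof -
  have "1 \<le> c * R"
    using mult_mono[of 1 c 1 R] assms by simp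
  show ?thesis
  proof (cases "A = 1")
    case True
    txt \<open>At scale 1, \<open>sim\<close> gives no lower bound on \<open>|a|\<close> (\<open>a = 0\<close> is allowed), so only
      the trivial count is available.\<close>
    have "real (card {n \<in> lattice3. norm n \<le> c * R \<and> \<bar>phase a s n - m\<bar> \<le> K})
        \<le> real (card {n \<in> lattice3. norm n \<le> c * R})"
      by (intro of_nat_mono card_mono finite_lattice3_cball) auto
    also have "\<dots> \<le> (2 * (c * R) + 1) ^ 3"
      using \<open>1 \<le> c * R\<close> by (intro card_lattice3_cball_le) simp
    also have "\<dots> \<le> (3 * (c * R)) ^ 3"
      using \<open>1 \<le> c * R\<close> by (intro power_mono) linarith+
    also have "\<dots> = 27 * (c ^ 3 * R ^ 3)"
      by (simp add: power_mult_distrib)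
    also have "\<dots> \<le> (14336 * (4 * K + 3) * c) * (c ^ 3 * R ^ 3)"
      using mult_mono[of 27 "14336 * (4 * K + 3)" 1 c] assms by (intro mult_right_mono) auto
    also have "\<dots> = 14336 * (4 * K + 3) * c ^ 4 * R ^ 3"
      by (simp add: power3_eq_cube power4_eq_xxxx)
    finally show ?thesis
      using True \<open>1 \<le> R\<close> by simp
  next
    case False
    then have "A / c \<le> norm a"
      using \<open>sim c (norm a) A\<close> by (simp add: sim_def)
    moreover have "min A R / c \<le> A / c"
      using assms by (intro divide_right_mono) auto
    moreover have "min A R / c \<le> min A R"
      using frac_le[of "min A R" "min A R" 1 c] assms by simp
    ultimately have le: "min A R / c \<le> min (norm a) (c * R)"
      using \<open>1 \<le> c * R\<close> mult_right_mono[of 1 c R] assms by linarith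
    have pos: "0 < min A R / c"
      using assms by simp
    then have prod_pos: "0 < min (norm a) (c * R) * (min A R / c)"
      using le by (intro mult_pos_pos) linarith+
    have "a \<noteq> 0"
    proof
      assume "a = 0"
      then have "min (norm a) (c * R) \<le> 0"
        by simp
      then show False
        using le pos by linarith
    qed
    have "real (card {n \<in> lattice3. norm n \<le> c * R \<and> \<bar>phase a s n - m\<bar> \<le> K})
        \<le> 14336 * (4 * K + 3) * (c * R) ^ 3 / min (norm a) (c * R)"
      using \<open>a \<noteq> 0\<close> \<open>s \<in> {1, -1}\<close> \<open>0 \<le> K\<close> \<open>1 \<le> c * R\<close> by (rule card_phase_level_set_le)
    also have "\<dots> \<le> 14336 * (4 * K + 3) * (c * R) ^ 3 / (min A R / c)"
      using assms by (intro divide_left_mono[OF le _ prod_pos]) simp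
    also have "\<dots> = 14336 * (4 * K + 3) * c ^ 4 * R ^ 3 / min A R"
      using pos by (simp add: power_mult_distrib power3_eq_cube power4_eq_xxxx)
    finally show ?thesis .
  qed
qed

lemma card_phase_resonant_set_le:
  fixes a :: "real ^ 3" and m :: real
  assumes "1 \<le> c" and "0 \<le> K" and "1 \<le> N" and "1 \<le> A" and "1 \<le> B"
    and "a \<in> lattice3" and "sim c (norm a) A" and "s \<in> {1, -1}"
  defines "S \<equiv> {n \<in> lattice3. sim c (norm n) N \<and> sim c (norm (n + a)) B \<and> \<bar>phase a s n - m\<bar> \<le> K}"
  shows "finite S \<and> real (card S) \<le> 14336 * (4 * K + 3) * c ^ 4 * (min B N) ^ 3 / min (min A B) N"
proof (cases "N \<le> B")
  case True
  define U where "U = {n \<in> lattice3. norm n \<le> c * N \<and> \<bar>phase a s n - m\<bar> \<le> K}"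
  have "S \<subseteq> U"
    using sim_imp_le[OF \<open>1 \<le> c\<close>] by (auto simp: S_def U_def)
  moreover have "finite U"
    unfolding U_def by (rule rev_finite_subset[OF finite_lattice3_cball]) auto
  ultimately have "finite S" "card S \<le> card U"
    by (auto intro: finite_subset card_mono)
  moreover have "real (card U) \<le> 14336 * (4 * K + 3) * c ^ 4 * N ^ 3 / min A N"
    unfolding U_def using assms by (intro card_phase_level_set_scaled_le) auto
  ultimately show ?thesis
    using True by (simp add: min_absorb2 min.assoc)
next
  case False
  define U where "U = {n \<in> lattice3. norm n \<le> c * B \<and> \<bar>phase a s n - s * m\<bar> \<le> K}"
  define reflect where "reflect n = - (n + a)" for n :: "real ^ 3"
  have "reflect ` S \<subseteq> U"
  proof
    fix y assume "y \<in> reflect ` S"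
    then obtain n where "n \<in> S" and y: "y = reflect n"
      by auto
    have "y \<in> lattice3"
      using \<open>n \<in> S\<close> \<open>a \<in> lattice3\<close> unfolding y reflect_def S_def
      by (blast intro: lattice3_add lattice3_uminus)
    moreover have "norm y \<le> c * B"
      using \<open>n \<in> S\<close> sim_imp_le[OF \<open>1 \<le> c\<close>] by (simp only: y reflect_def norm_minus_cancel S_def) auto
    moreover have "\<bar>phase a s y - s * m\<bar> = \<bar>s\<bar> * \<bar>phase a s n - m\<bar>"
      unfolding y reflect_def phase_reflect[OF \<open>s \<in> {1, -1}\<close>]
      by (simp add: abs_mult flip: right_diff_distrib)
    ultimately show "y \<in> U"
      using \<open>n \<in> S\<close> \<open>s \<in> {1, -1}\<close> by (auto simp: U_def S_def)
  qed
  moreover have "inj_on reflect S"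
    by (rule inj_onI) (simp add: reflect_def)
  moreover have "finite U"
    unfolding U_def by (rule rev_finite_subset[OF finite_lattice3_cball]) auto
  ultimately have "finite S" "card S \<le> card U"
    by (auto intro: inj_on_finite card_inj_on_le)
  moreover have "real (card U) \<le> 14336 * (4 * K + 3) * c ^ 4 * B ^ 3 / min A B"
    unfolding U_def using assms by (intro card_phase_level_set_scaled_le) auto
  ultimately show ?thesis
    using False by (simp add: min_absorb1)
qed

theorem lemma4p17:
  fixes c K :: real
  assumes "c \<ge> 1" and "K > 0"
  shows "\<exists>C>0. \<forall>N A B :: real. \<forall>a :: real ^ 3. \<forall>s :: real. \<forall>m :: int.
    N \<ge> 1 \<longrightarrow> A \<ge> 1 \<longrightarrow> B \<ge> 1 \<longrightarrow> a \<in> lattice3 \<longrightarrow> sim c (norm a) A \<longrightarrow>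
    s \<in> {1, -1} \<longrightarrow>
    (let S = {n \<in> lattice3. sim c (norm n) N \<and> sim c (norm (n + a)) B \<and>
                 \<bar>jbr (a + n) + s * jbr n - of_int m\<bar> \<le> K}
     in finite S \<and> real (card S) \<le> C * (min B N) ^ 3 / min (min A B) N)"
proof (intro exI[of _ "14336 * (4 * K + 3) * c ^ 4"] conjI allI impI)
  show "0 < 14336 * (4 * K + 3) * c ^ 4"
    using assms by simp
  fix N A B :: real and a :: "real ^ 3" and s :: real and m :: int
  assume "1 \<le> N" "1 \<le> A" "1 \<le> B" "a \<in> lattice3" "sim c (norm a) A" "s \<in> {1, -1}"
  then show "let S = {n \<in> lattice3. sim c (norm n) N \<and> sim c (norm (n + a)) B \<and>
                 \<bar>jbr (a + n) + s * jbr n - of_int m\<bar> \<le> K}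
     in finite S \<and> real (card S) \<le> 14336 * (4 * K + 3) * c ^ 4 * (min B N) ^ 3 / min (min A B) N"
    using card_phase_resonant_set_le[of c K N A B a s "of_int m"] assms
    by (simp add: Let_def phase_def)
qed

end
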